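(* Let $\lambda_0,\lambda_1$ be real and $a<b$. The smallest constant $C$ such that every $f\in C^2[a,b]$ with $f(a)=f(b)=0$ satisfies $|f(t)|\le C\max_{\theta\in[a,b]}|L_{(\lambda_0,\lambda_1)}f(\theta)|$ for all $t\in[a,b]$ is $C=M^{a,b}_{\lambda_0,\lambda_1}$. Moreover $\Omega^{a,b}_{\lambda_0,\lambda_1,0}(t)>0$ for all $t\in(a,b)$.
   Context: For real $\lambda_0,\dots,\lambda_N$, $L_{(\lambda_0,\dots,\lambda_N)}=\prod_{j=0}^N(\frac{d}{dt}-\lambda_j)$ and $E(\lambda_0,\dots,\lambda_N)=\{f\in C^{N+1}(\mathbb{R}):L_{(\lambda_0,\dots,\lambda_N)}f=0\}$. For real $\lambda_0,\lambda_1$ and $a<b$, $\Omega^{a,b}_{\lambda_0,\lambda_1,0}$ denotes the unique $u\in E(\lambda_0,\lambda_1,0)$ with $u(a)=u(b)=0$ and $L_{(\lambda_0,\lambda_1)}u\equiv-1$, and $M^{a,b}_{\lambda_0,\lambda_1}:=\max_{t\in[a,b]}|\Omega^{a,b}_{\lambda_0,\lambda_1,0}(t)|$. *)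

theory Defs
  imports "HOL-Analysis.Analysis"
begin

text \<open>The differential operator L_{(l_0,...,l_N)} = prod_j (d/dt - l_j), applied to a
  function on the reals; the list [l_0,...,l_N] lists the lambdas. The factors commute
  (constant coefficients), so the order of application is immaterial.\<close>
fun Lop :: "real list \<Rightarrow> (real \<Rightarrow> real) \<Rightarrow> real \<Rightarrow> real" where
  "Lop [] f = f"
| "Lop (l # ls) f = (\<lambda>t. deriv (Lop ls f) t - l * Lop ls f t)"

definition Ck :: "nat \<Rightarrow> (real \<Rightarrow> real) \<Rightarrow> bool" where
  "Ck k f \<longleftrightarrow> (\<forall>j<k. \<forall>t. (deriv ^^ j) f differentiable (at t)) \<and> continuous_on UNIV ((deriv ^^ k) f)"

text \<open>E(l_0,...,l_N), for the list ls = [l_0,...,l_N] (so N+1 = length ls).\<close>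
definition Espace :: "real list \<Rightarrow> (real \<Rightarrow> real) set" where
  "Espace ls = {f. Ck (length ls) f \<and> (\<forall>t. Lop ls f t = 0)}"

definition Omega :: "real \<Rightarrow> real \<Rightarrow> real \<Rightarrow> real \<Rightarrow> (real \<Rightarrow> real)" where
  "Omega a b l0 l1 = (THE u. u \<in> Espace [l0, l1, 0] \<and> u a = 0 \<and> u b = 0
                        \<and> (\<forall>t. Lop [l0, l1] u t = -1))"

definition Mconst :: "real \<Rightarrow> real \<Rightarrow> real \<Rightarrow> real \<Rightarrow> real" where
  "Mconst a b l0 l1 = (SUP t\<in>{a..b}. \<bar>Omega a b l0 l1 t\<bar>)"

text \<open>f in C^2[a,b] with first and second derivatives f1, f2 (one-sided at the endpoints).\<close>
definition C2_on :: "real \<Rightarrow> real \<Rightarrow> (real \<Rightarrow> real) \<Rightarrow> (real \<Rightarrow> real) \<Rightarrow> (real \<Rightarrow> real) \<Rightarrow> bool" where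
  "C2_on a b f f1 f2 \<longleftrightarrow>
     (\<forall>t\<in>{a..b}. (f has_real_derivative f1 t) (at t within {a..b})) \<and>
     (\<forall>t\<in>{a..b}. (f1 has_real_derivative f2 t) (at t within {a..b})) \<and>
     continuous_on {a..b} f2"

end

theory Submission
  imports Defs
begin

(* Factor L = (D - l0)(D - l1). For psi = exp (-l0 t) (g' - l1 g) one has
   psi' = exp (-l0 t) L g  and  (exp (-l1 t) g)' = exp ((l0 - l1) t) psi.
   Hence if L g <= 0 then psi decreases, and exp (-l1 t) g, which vanishes at a and b, cannot
   become negative in between; if L g < 0 it is even positive inside (maximum principle).
   The problem L u = -1, u a = u b = 0 is solved explicitly, and uniquely, which identifies
   Omega; it is positive inside by the strict principle. If f a = f b = 0 and |L f| <= K, then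
   K Omega - f and K Omega + f both satisfy the principle, so |f| <= K Omega <= K M; the choice
   f = Omega, with L f = -1, shows that no constant below M works. *)

lemma mvt_within_subinterval:
  fixes f :: "real \<Rightarrow> real"
  assumes "a \<le> c" "c < d" "d \<le> b"
    and f': "\<forall>t\<in>{a..b}. (f has_real_derivative f' t) (at t within {a..b})"
  shows "\<exists>x\<in>{c<..<d}. f d - f c = f' x * (d - c)"
proof -
  have "\<exists>x\<in>{c<..<d}. f d - f c = (\<lambda>h. f' x * h) (d - c)"
  proof (rule mvt_simple[OF \<open>c < d\<close>])
    fix x assume "c \<le> x" "x \<le> d"
    with assms have "(f has_real_derivative f' x) (at x within {a..b})" by auto
    then have "(f has_real_derivative f' x) (at x within {c..d})"
      by (rule DERIV_subset) (use assms in auto)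
    then show "(f has_derivative (\<lambda>h. f' x * h)) (at x within {c..d})"
      by (simp add: has_field_derivative_def)
  qed
  then show ?thesis by simp
qed

lemma deriv_nonpos_imp_antimono_within:
  fixes f :: "real \<Rightarrow> real"
  assumes f': "\<forall>t\<in>{a..b}. (f has_real_derivative f' t) (at t within {a..b})"
    and nonpos: "\<forall>t\<in>{a..b}. f' t \<le> 0"
    and "a \<le> c" "c < d" "d \<le> b"
  shows "f d \<le> f c"
proof -
  obtain x where x: "x \<in> {c<..<d}" "f d - f c = f' x * (d - c)"
    using mvt_within_subinterval[OF \<open>a \<le> c\<close> \<open>c < d\<close> \<open>d \<le> b\<close> f'] by blast
  have "f' x * (d - c) \<le> 0"
    using nonpos x assms by (intro mult_nonpos_nonneg) auto
  with x show ?thesis by simp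
qed

lemma deriv_neg_imp_strict_antimono_within:
  fixes f :: "real \<Rightarrow> real"
  assumes f': "\<forall>t\<in>{a..b}. (f has_real_derivative f' t) (at t within {a..b})"
    and neg: "\<forall>t\<in>{a..b}. f' t < 0"
    and "a \<le> c" "c < d" "d \<le> b"
  shows "f d < f c"
proof -
  obtain x where x: "x \<in> {c<..<d}" "f d - f c = f' x * (d - c)"
    using mvt_within_subinterval[OF \<open>a \<le> c\<close> \<open>c < d\<close> \<open>d \<le> b\<close> f'] by blast
  have "f' x * (d - c) < 0"
    using neg x assms by (intro mult_neg_pos) auto
  with x show ?thesis by simp
qed

lemma nonneg_if_deriv_sign_antimono:
  fixes \<phi> \<psi> w :: "real \<Rightarrow> real"
  assumes \<phi>': "\<forall>t\<in>{a..b}. (\<phi> has_real_derivative w t * \<psi> t) (at t within {a..b})"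
    and w: "\<And>t. w t > 0" and \<phi>a: "\<phi> a = 0" and \<phi>b: "\<phi> b = 0"
    and \<psi>: "\<And>c d. a \<le> c \<Longrightarrow> c < d \<Longrightarrow> d \<le> b \<Longrightarrow> \<psi> d \<le> \<psi> c"
    and t: "t \<in> {a..b}"
  shows "\<phi> t \<ge> 0"
proof (rule ccontr)
  assume "\<not> \<phi> t \<ge> 0"
  then have neg: "\<phi> t < 0" by simp
  with t \<phi>a \<phi>b have at: "a < t" "t < b" by (auto simp: le_less)
  obtain c1 where c1: "c1 \<in> {a<..<t}" "\<phi> t - \<phi> a = w c1 * \<psi> c1 * (t - a)"
    using mvt_within_subinterval[OF order.refl at(1) _ \<phi>'] at by force
  obtain c2 where c2: "c2 \<in> {t<..<b}" "\<phi> b - \<phi> t = w c2 * \<psi> c2 * (b - t)"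
    using mvt_within_subinterval[OF _ at(2) order.refl \<phi>'] at by force
  have "\<psi> c1 < 0"
    using c1 neg \<phi>a at w[of c1] by (auto simp: mult_less_0_iff)
  moreover have "\<psi> c2 > 0"
  proof -
    have "0 < w c2 * \<psi> c2 * (b - t)" using c2 neg \<phi>b by simp
    then show ?thesis using w[of c2] at by (simp add: zero_less_mult_iff)
  qed
  moreover have "\<psi> c2 \<le> \<psi> c1"
    using c1 c2 by (intro \<psi>) auto
  ultimately show False by simp
qed

lemma pos_if_deriv_sign_strict_antimono:
  fixes \<phi> \<psi> w :: "real \<Rightarrow> real"
  assumes \<phi>': "\<forall>t\<in>{a..b}. (\<phi> has_real_derivative w t * \<psi> t) (at t within {a..b})"
    and w: "\<And>t. w t > 0" and \<phi>a: "\<phi> a = 0" and \<phi>b: "\<phi> b = 0"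
    and \<psi>: "\<And>c d. a \<le> c \<Longrightarrow> c < d \<Longrightarrow> d \<le> b \<Longrightarrow> \<psi> d < \<psi> c"
    and t: "t \<in> {a<..<b}"
  shows "\<phi> t > 0"
proof -
  have at: "a < t" "t < b" using t by auto
  have "\<phi> t \<ge> 0"
    using nonneg_if_deriv_sign_antimono[OF \<phi>' w \<phi>a \<phi>b, of t] \<psi> t by (auto intro: less_imp_le)
  moreover have "\<phi> t \<noteq> 0"
  proof
    assume zero: "\<phi> t = 0"
    obtain c1 where c1: "c1 \<in> {a<..<t}" "\<phi> t - \<phi> a = w c1 * \<psi> c1 * (t - a)"
      using mvt_within_subinterval[OF order.refl at(1) _ \<phi>'] at by force
    obtain c2 where c2: "c2 \<in> {t<..<b}" "\<phi> b - \<phi> t = w c2 * \<psi> c2 * (b - t)"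
      using mvt_within_subinterval[OF _ at(2) order.refl \<phi>'] at by force
    have "\<psi> c1 = 0" using c1 zero \<phi>a at w[of c1] by simp
    moreover have "\<psi> c2 = 0" using c2 zero \<phi>b at w[of c2] by simp
    moreover have "\<psi> c2 < \<psi> c1" using c1 c2 by (intro \<psi>) auto
    ultimately show False by simp
  qed
  ultimately show ?thesis by simp
qed

lemma has_real_derivative_exp_factor_outer:
  fixes g g' g'' :: "real \<Rightarrow> real"
  assumes "(g has_real_derivative g' t) (at t within S)"
    and "(g' has_real_derivative g'' t) (at t within S)"
  shows "((\<lambda>s. exp (- la * s) * (g' s - lb * g s)) has_real_derivative
           exp (- la * t) * (g'' t - (la + lb) * g' t + la * lb * g t)) (at t within S)"
proof -
  have "((\<lambda>s. exp (- la * s) * (g' s - lb * g s)) has_real_derivative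
      exp (- la * t) * (- la) * (g' t - lb * g t) + exp (- la * t) * (g'' t - lb * g' t)) (at t within S)"
    using assms by (auto intro!: derivative_eq_intros)
  then show ?thesis by (simp add: algebra_simps)
qed

lemma has_real_derivative_exp_factor_inner:
  fixes g g' :: "real \<Rightarrow> real"
  assumes "(g has_real_derivative g' t) (at t within S)"
  shows "((\<lambda>s. exp (- lb * s) * g s) has_real_derivative
           exp ((la - lb) * t) * (exp (- la * t) * (g' t - lb * g t))) (at t within S)"
proof -
  have "((\<lambda>s. exp (- lb * s) * g s) has_real_derivative
      exp (- lb * t) * (- lb) * g t + exp (- lb * t) * g' t) (at t within S)"
    using assms by (auto intro!: derivative_eq_intros)
  moreover have "exp ((la - lb) * t) * (exp (- la * t) * (g' t - lb * g t))
      = exp (- lb * t) * (- lb) * g t + exp (- lb * t) * g' t"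
    by (simp add: algebra_simps flip: exp_add)
  ultimately show ?thesis by simp
qed

lemma maximum_principle:
  fixes g g' g'' :: "real \<Rightarrow> real"
  assumes g': "\<forall>t\<in>{a..b}. (g has_real_derivative g' t) (at t within {a..b})"
    and g'': "\<forall>t\<in>{a..b}. (g' has_real_derivative g'' t) (at t within {a..b})"
    and "g a = 0" "g b = 0"
    and Lg: "\<forall>t\<in>{a..b}. g'' t - (la + lb) * g' t + la * lb * g t \<le> 0"
    and t: "t \<in> {a..b}"
  shows "g t \<ge> 0"
proof -
  let ?\<psi> = "\<lambda>s. exp (- la * s) * (g' s - lb * g s)"
  have "exp (- lb * t) * g t \<ge> 0"
  proof (rule nonneg_if_deriv_sign_antimono[where \<phi> = "\<lambda>s. exp (- lb * s) * g s" and \<psi> = ?\<psi>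
        and w = "\<lambda>s. exp ((la - lb) * s)", OF _ _ _ _ _ t])
    show "\<forall>s\<in>{a..b}. ((\<lambda>s. exp (- lb * s) * g s) has_real_derivative exp ((la - lb) * s) * ?\<psi> s)
        (at s within {a..b})"
      by (intro ballI has_real_derivative_exp_factor_inner) (use g' in auto)
    show "?\<psi> d \<le> ?\<psi> c" if "a \<le> c" "c < d" "d \<le> b" for c d
    proof (rule deriv_nonpos_imp_antimono_within[OF _ _ that])
      show "\<forall>s\<in>{a..b}. (?\<psi> has_real_derivative
          exp (- la * s) * (g'' s - (la + lb) * g' s + la * lb * g s)) (at s within {a..b})"
        by (intro ballI has_real_derivative_exp_factor_outer) (use g' g'' in auto)
      show "\<forall>s\<in>{a..b}. exp (- la * s) * (g'' s - (la + lb) * g' s + la * lb * g s) \<le> 0"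
        using Lg by (simp add: mult_nonneg_nonpos)
    qed
  qed (use assms in auto)
  then show ?thesis by (simp add: zero_le_mult_iff)
qed

lemma strong_maximum_principle:
  fixes g g' g'' :: "real \<Rightarrow> real"
  assumes g': "\<forall>t\<in>{a..b}. (g has_real_derivative g' t) (at t within {a..b})"
    and g'': "\<forall>t\<in>{a..b}. (g' has_real_derivative g'' t) (at t within {a..b})"
    and "g a = 0" "g b = 0"
    and Lg: "\<forall>t\<in>{a..b}. g'' t - (la + lb) * g' t + la * lb * g t < 0"
    and t: "t \<in> {a<..<b}"
  shows "g t > 0"
proof -
  let ?\<psi> = "\<lambda>s. exp (- la * s) * (g' s - lb * g s)"
  have "exp (- lb * t) * g t > 0"
  proof (rule pos_if_deriv_sign_strict_antimono[where \<phi> = "\<lambda>s. exp (- lb * s) * g s" and \<psi> = ?\<psi>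
        and w = "\<lambda>s. exp ((la - lb) * s)", OF _ _ _ _ _ t])
    show "\<forall>s\<in>{a..b}. ((\<lambda>s. exp (- lb * s) * g s) has_real_derivative exp ((la - lb) * s) * ?\<psi> s)
        (at s within {a..b})"
      by (intro ballI has_real_derivative_exp_factor_inner) (use g' in auto)
    show "?\<psi> d < ?\<psi> c" if "a \<le> c" "c < d" "d \<le> b" for c d
    proof (rule deriv_neg_imp_strict_antimono_within[OF _ _ that])
      show "\<forall>s\<in>{a..b}. (?\<psi> has_real_derivative
          exp (- la * s) * (g'' s - (la + lb) * g' s + la * lb * g s)) (at s within {a..b})"
        by (intro ballI has_real_derivative_exp_factor_outer) (use g' g'' in auto)
      show "\<forall>s\<in>{a..b}. exp (- la * s) * (g'' s - (la + lb) * g' s + la * lb * g s) < 0"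
        using Lg by (simp add: mult_pos_neg)
    qed
  qed (use assms in auto)
  then show ?thesis by (simp add: zero_less_mult_iff)
qed

(* Explicit derivatives up to order three: Omega must lie in E(l0, l1, 0), a space of C^3 functions. *)
definition has_derivs3 :: "(real \<Rightarrow> real) \<Rightarrow> (real \<Rightarrow> real) \<Rightarrow> (real \<Rightarrow> real) \<Rightarrow> (real \<Rightarrow> real) \<Rightarrow> bool" where
  "has_derivs3 u u1 u2 u3 \<longleftrightarrow>
     (\<forall>t. (u has_real_derivative u1 t) (at t)) \<and> (\<forall>t. (u1 has_real_derivative u2 t) (at t)) \<and>
     (\<forall>t. (u2 has_real_derivative u3 t) (at t)) \<and> continuous_on UNIV u3"

lemma has_derivs3_add_scaled:
  assumes "has_derivs3 u u1 u2 u3" "has_derivs3 v v1 v2 v3"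
  shows "has_derivs3 (\<lambda>t. u t + c * v t) (\<lambda>t. u1 t + c * v1 t) (\<lambda>t. u2 t + c * v2 t) (\<lambda>t. u3 t + c * v3 t)"
  using assms unfolding has_derivs3_def by (auto intro!: derivative_eq_intros continuous_intros)

lemma has_derivs3_exp:
  "has_derivs3 (\<lambda>t. exp (l * (t - a))) (\<lambda>t. l * exp (l * (t - a)))
     (\<lambda>t. l\<^sup>2 * exp (l * (t - a))) (\<lambda>t. l ^ 3 * exp (l * (t - a)))"
  unfolding has_derivs3_def
  by (auto intro!: derivative_eq_intros continuous_intros simp: power2_eq_square power3_eq_cube)

lemma has_derivs3_mult_exp:
  "has_derivs3 (\<lambda>t. (t - a) * exp (l * (t - a))) (\<lambda>t. (1 + l * (t - a)) * exp (l * (t - a)))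
     (\<lambda>t. (2 * l + l\<^sup>2 * (t - a)) * exp (l * (t - a))) (\<lambda>t. (3 * l\<^sup>2 + l ^ 3 * (t - a)) * exp (l * (t - a)))"
  unfolding has_derivs3_def
  by (auto intro!: derivative_eq_intros continuous_intros simp: algebra_simps power2_eq_square power3_eq_cube)

lemma has_derivs3_poly2:
  "has_derivs3 (\<lambda>t. c0 + c1 * t + c2 * t\<^sup>2) (\<lambda>t. c1 + 2 * c2 * t) (\<lambda>t. 2 * c2) (\<lambda>t. 0)"
  unfolding has_derivs3_def
  by (auto intro!: derivative_eq_intros continuous_intros simp: algebra_simps power2_eq_square)

lemma exists_particular_solution:
  "\<exists>p p1 p2 p3. has_derivs3 p p1 p2 p3 \<and> (\<forall>t. p2 t - (l0 + l1) * p1 t + l0 * l1 * p t = -1)"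
proof -
  consider "l0 * l1 \<noteq> 0" | "l0 * l1 = 0" "l0 + l1 \<noteq> 0" | "l0 * l1 = 0" "l0 + l1 = 0" by blast
  then show ?thesis
  proof cases
    case 1
    show ?thesis
      by (intro exI conjI, rule has_derivs3_poly2[of "- 1 / (l0 * l1)" 0 0]) (use 1 in \<open>auto simp: field_simps\<close>)
  next
    case 2
    show ?thesis
      by (intro exI conjI, rule has_derivs3_poly2[of 0 "1 / (l0 + l1)" 0]) (use 2 in \<open>auto simp: field_simps\<close>)
  next
    case 3
    show ?thesis
      by (intro exI conjI, rule has_derivs3_poly2[of 0 0 "- 1 / 2"]) (use 3 in \<open>auto simp: field_simps\<close>)
  qed
qed

lemma exists_homogeneous_solution_vanishing_at:
  assumes "a < b"
  shows "\<exists>z z1 z2 z3. has_derivs3 z z1 z2 z3 \<and> (\<forall>t. z2 t - (l0 + l1) * z1 t + l0 * l1 * z t = 0)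
    \<and> z a = 0 \<and> z b \<noteq> 0"
proof (cases "l0 = l1")
  case True
  show ?thesis
    by (intro exI conjI, rule has_derivs3_mult_exp[of a l0])
      (use True assms in \<open>auto simp: algebra_simps power2_eq_square\<close>)
next
  case False
  have exp_ne: "exp (l0 * (b - a)) \<noteq> exp (l1 * (b - a))" using False assms by simp
  show ?thesis
    by (intro exI conjI, rule has_derivs3_add_scaled[OF has_derivs3_exp[of l0 a] has_derivs3_exp[of l1 a], of "-1"])
      (use exp_ne in \<open>auto simp: algebra_simps power2_eq_square\<close>)
qed

lemma exists_boundary_solution:
  assumes "a < b"
  shows "\<exists>u u1 u2 u3. has_derivs3 u u1 u2 u3 \<and> u a = 0 \<and> u b = 0
    \<and> (\<forall>t. u2 t - (l0 + l1) * u1 t + l0 * l1 * u t = -1)"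
proof -
  obtain p p1 p2 p3 where p: "has_derivs3 p p1 p2 p3"
    and Lp: "\<forall>t. p2 t - (l0 + l1) * p1 t + l0 * l1 * p t = -1"
    using exists_particular_solution by blast
  obtain z z1 z2 z3 where z: "has_derivs3 z z1 z2 z3"
    and Lz: "\<forall>t. z2 t - (l0 + l1) * z1 t + l0 * l1 * z t = 0" and za: "z a = 0" and zb: "z b \<noteq> 0"
    using exists_homogeneous_solution_vanishing_at[OF assms] by blast
  have p2: "p2 t = (l0 + l1) * p1 t - l0 * l1 * p t - 1" for t
    using Lp[rule_format, of t] by linarith
  have z2: "z2 t = (l0 + l1) * z1 t - l0 * l1 * z t" for t
    using Lz[rule_format, of t] by linarith
  define \<alpha> where "\<alpha> = - p a"
  define \<beta> where "\<beta> = - (p b + \<alpha> * exp (l1 * (b - a))) / z b"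
  have \<beta>: "p b + \<alpha> * exp (l1 * (b - a)) + \<beta> * z b = 0"
    using zb by (simp add: \<beta>_def)
  show ?thesis
    by (intro exI conjI,
        rule has_derivs3_add_scaled[OF has_derivs3_add_scaled[OF p has_derivs3_exp[of l1 a]] z, of \<alpha> \<beta>])
      (use za \<beta> in \<open>auto simp: \<alpha>_def p2 z2 algebra_simps power2_eq_square\<close>)
qed

lemma Lop_pair:
  assumes "\<And>t. (u has_real_derivative u1 t) (at t)" "\<And>t. (u1 has_real_derivative u2 t) (at t)"
  shows "Lop [l0, l1] u t = u2 t - (l0 + l1) * u1 t + l0 * l1 * u t"
proof -
  have "deriv u = u1"
    using assms by (intro ext DERIV_imp_deriv)
  moreover have "deriv (\<lambda>t. u1 t - l1 * u t) t = u2 t - l1 * u1 t"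
    using assms by (intro DERIV_imp_deriv) (auto intro!: derivative_eq_intros)
  ultimately show ?thesis by (simp add: algebra_simps)
qed

lemma has_derivs3_Ck3:
  assumes "has_derivs3 u u1 u2 u3"
  shows "Ck 3 u"
proof -
  have "deriv u = u1" "deriv u1 = u2" "deriv u2 = u3"
    using assms by (auto intro!: ext DERIV_imp_deriv simp: has_derivs3_def)
  then have iter: "(deriv ^^ 0) u = u" "(deriv ^^ 1) u = u1" "(deriv ^^ 2) u = u2" "(deriv ^^ 3) u = u3"
    by (simp_all add: numeral_2_eq_2 numeral_3_eq_3)
  have "(deriv ^^ j) u differentiable (at t)" if "j < 3" for j t
  proof -
    have "u differentiable (at t)" "u1 differentiable (at t)" "u2 differentiable (at t)"
      using assms unfolding has_derivs3_def real_differentiable_def by blast+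
    moreover from that have "j = 0 \<or> j = 1 \<or> j = 2" by auto
    ultimately show ?thesis using iter by (elim disjE) simp_all
  qed
  then show ?thesis
    using iter assms by (simp add: Ck_def has_derivs3_def)
qed

lemma has_derivs3_in_Espace:
  assumes u: "has_derivs3 u u1 u2 u3" and Lu: "\<forall>t. u2 t - (l0 + l1) * u1 t + l0 * l1 * u t = c"
  shows "u \<in> Espace [l0, l1, 0]"
proof -
  have "Lop [l0, l1, 0] u t = 0" for t
  proof -
    have "deriv u = u1" using u by (intro ext DERIV_imp_deriv) (simp add: has_derivs3_def)
    then have "Lop [l0, l1, 0] u t = Lop [l0, l1] u1 t" by simp
    also have "\<dots> = u3 t - (l0 + l1) * u2 t + l0 * l1 * u1 t"
      using u by (intro Lop_pair) (simp_all add: has_derivs3_def)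
    also have "\<dots> = 0"
    proof (rule DERIV_unique)
      show "((\<lambda>t. u2 t - (l0 + l1) * u1 t + l0 * l1 * u t) has_real_derivative
          u3 t - (l0 + l1) * u2 t + l0 * l1 * u1 t) (at t)"
        using u unfolding has_derivs3_def by (auto intro!: derivative_eq_intros)
      show "((\<lambda>t. u2 t - (l0 + l1) * u1 t + l0 * l1 * u t) has_real_derivative 0) (at t)"
        using Lu by simp
    qed
    finally show ?thesis .
  qed
  then show ?thesis
    using has_derivs3_Ck3[OF u] by (simp add: Espace_def numeral_3_eq_3)
qed

lemma homogeneous_boundary_solution_eq_0:
  fixes w w' w'' :: "real \<Rightarrow> real"
  assumes "a < b"
    and w': "\<And>t. (w has_real_derivative w' t) (at t)" and w'': "\<And>t. (w' has_real_derivative w'' t) (at t)"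
    and Lw: "\<And>t. w'' t - (l0 + l1) * w' t + l0 * l1 * w t = 0" and "w a = 0" "w b = 0"
  shows "w t = 0"
proof -
  define \<psi> where "\<psi> s = exp (- l0 * s) * (w' s - l1 * w s)" for s
  define \<phi> where "\<phi> s = exp (- l1 * s) * w s" for s
  have "(\<psi> has_real_derivative 0) (at s)" for s
    using has_real_derivative_exp_factor_outer[where g = w and g' = w' and g'' = w'' and la = l0 and lb = l1,
        OF w'[of s] w''[of s]] Lw
    unfolding \<psi>_def by simp
  then obtain C where C: "\<And>s. \<psi> s = C"
    using has_field_derivative_zero_constant[of UNIV \<psi>] by auto
  have \<phi>': "(\<phi> has_real_derivative exp ((l0 - l1) * s) * C) (at s)" for s
    using has_real_derivative_exp_factor_inner[where g = w and g' = w' and la = l0 and lb = l1, OF w'[of s]] C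
    unfolding \<phi>_def \<psi>_def by metis
  then have \<phi>'_within: "\<forall>s\<in>{a..b}. (\<phi> has_real_derivative exp ((l0 - l1) * s) * C) (at s within {a..b})"
    by (blast intro: has_field_derivative_at_within)
  obtain x where "\<phi> b - \<phi> a = exp ((l0 - l1) * x) * C * (b - a)"
    using mvt_within_subinterval[OF order.refl \<open>a < b\<close> order.refl \<phi>'_within] by blast
  then have "C = 0" using assms by (simp add: \<phi>_def)
  then obtain K where "\<And>s. \<phi> s = K"
    using has_field_derivative_zero_constant[of UNIV \<phi>] \<phi>' by auto
  then have "\<phi> t = \<phi> a" by simp
  then show ?thesis using \<open>w a = 0\<close> by (simp add: \<phi>_def)
qed

lemma Ck3_has_real_derivative:
  assumes "Ck 3 v"
  shows "(v has_real_derivative deriv v t) (at t)"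
    and "(deriv v has_real_derivative deriv (deriv v) t) (at t)"
proof -
  have "\<forall>t. (deriv ^^ j) v differentiable (at t)" if "j < 3" for j
    using assms that by (simp add: Ck_def)
  from this[of 0] this[of 1] show "(v has_real_derivative deriv v t) (at t)"
    and "(deriv v has_real_derivative deriv (deriv v) t) (at t)"
    by (simp_all add: DERIV_deriv_iff_real_differentiable)
qed

lemma Omega_eqI:
  assumes ab: "a < b" and u: "has_derivs3 u u1 u2 u3" "u a = 0" "u b = 0"
    and Lu: "\<forall>t. u2 t - (l0 + l1) * u1 t + l0 * l1 * u t = -1"
  shows "Omega a b l0 l1 = u"
  unfolding Omega_def
proof (rule the_equality)
  have "Lop [l0, l1] u t = u2 t - (l0 + l1) * u1 t + l0 * l1 * u t" for t
    using u(1) by (intro Lop_pair) (simp_all add: has_derivs3_def)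
  with Lu have "Lop [l0, l1] u t = -1" for t by simp
  then show "u \<in> Espace [l0, l1, 0] \<and> u a = 0 \<and> u b = 0 \<and> (\<forall>t. Lop [l0, l1] u t = -1)"
    using has_derivs3_in_Espace[OF u(1) Lu] u by blast
next
  fix v assume v: "v \<in> Espace [l0, l1, 0] \<and> v a = 0 \<and> v b = 0 \<and> (\<forall>t. Lop [l0, l1] v t = -1)"
  then have "Ck 3 v" by (simp add: Espace_def numeral_3_eq_3)
  note v' = Ck3_has_real_derivative[OF this]
  have Lv: "deriv (deriv v) t - (l0 + l1) * deriv v t + l0 * l1 * v t = -1" for t
    using v Lop_pair[OF v', of l0 l1 t] by simp
  have "v t - u t = 0" for t
  proof (rule homogeneous_boundary_solution_eq_0[OF ab, where w = "\<lambda>t. v t - u t"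
        and w' = "\<lambda>t. deriv v t - u1 t" and w'' = "\<lambda>t. deriv (deriv v) t - u2 t"])
    show "((\<lambda>t. v t - u t) has_real_derivative deriv v t - u1 t) (at t)" for t
      using v' u(1) unfolding has_derivs3_def by (blast intro: DERIV_diff)
    show "((\<lambda>t. deriv v t - u1 t) has_real_derivative deriv (deriv v) t - u2 t) (at t)" for t
      using v' u(1) unfolding has_derivs3_def by (blast intro: DERIV_diff)
    show "deriv (deriv v) t - u2 t - (l0 + l1) * (deriv v t - u1 t) + l0 * l1 * (v t - u t) = 0" for t
      using Lv[of t] Lu[rule_format, of t] by (simp add: algebra_simps)
  qed (use v u in auto)
  then show "v = u" by auto
qed

lemma has_derivs3_C2_on:
  assumes "has_derivs3 u u1 u2 u3"
  shows "C2_on a b u u1 u2"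
proof -
  have u1: "\<And>t. (u has_real_derivative u1 t) (at t)" and u2: "\<And>t. (u1 has_real_derivative u2 t) (at t)"
    and u3: "\<And>t. (u2 has_real_derivative u3 t) (at t)"
    using assms by (simp_all add: has_derivs3_def)
  have "continuous_on {a..b} u2"
    by (intro continuous_at_imp_continuous_on ballI DERIV_isCont[OF u3])
  then show ?thesis
    using u1 u2 by (simp add: C2_on_def has_field_derivative_at_within)
qed

lemma C2_on_continuous_on:
  assumes "C2_on a b f f1 f2"
  shows "continuous_on {a..b} f" "continuous_on {a..b} f1" "continuous_on {a..b} f2"
  using assms unfolding C2_on_def continuous_on_eq_continuous_within
  by (blast intro: DERIV_continuous)+

lemma le_SUP_continuous_on_Icc:
  fixes g :: "real \<Rightarrow> real"
  assumes "continuous_on {a..b} g" "t \<in> {a..b}"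
  shows "g t \<le> (SUP s\<in>{a..b}. g s)"
  using assms
  by (intro cSUP_upper bounded_imp_bdd_above compact_imp_bounded compact_continuous_image compact_Icc)

lemma comparison_with_boundary_solution:
  assumes u: "C2_on a b u u1 u2" "u a = 0" "u b = 0"
    and Lu: "\<forall>t\<in>{a..b}. u2 t - (l0 + l1) * u1 t + l0 * l1 * u t = -1"
    and f: "C2_on a b f f1 f2" "f a = 0" "f b = 0"
    and Lf: "\<forall>t\<in>{a..b}. \<bar>f2 t - (l0 + l1) * f1 t + l0 * l1 * f t\<bar> \<le> K"
    and t: "t \<in> {a..b}"
  shows "\<bar>f t\<bar> \<le> K * u t"
proof -
  have "K * u t + s * f t \<ge> 0" if s: "\<bar>s\<bar> = 1" for s
  proof (rule maximum_principle[where g = "\<lambda>t. K * u t + s * f t" and la = l0 and lb = l1, OF _ _ _ _ _ t])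
    show "\<forall>t\<in>{a..b}. ((\<lambda>t. K * u t + s * f t) has_real_derivative K * u1 t + s * f1 t) (at t within {a..b})"
      using u(1) f(1) by (auto simp: C2_on_def intro!: derivative_eq_intros)
    show "\<forall>t\<in>{a..b}. ((\<lambda>t. K * u1 t + s * f1 t) has_real_derivative K * u2 t + s * f2 t) (at t within {a..b})"
      using u(1) f(1) by (auto simp: C2_on_def intro!: derivative_eq_intros)
    show "\<forall>t\<in>{a..b}. K * u2 t + s * f2 t - (l0 + l1) * (K * u1 t + s * f1 t) + l0 * l1 * (K * u t + s * f t) \<le> 0"
    proof
      fix \<theta> assume \<theta>: "\<theta> \<in> {a..b}"
      let ?Lf = "f2 \<theta> - (l0 + l1) * f1 \<theta> + l0 * l1 * f \<theta>"
      have "K * u2 \<theta> + s * f2 \<theta> - (l0 + l1) * (K * u1 \<theta> + s * f1 \<theta>) + l0 * l1 * (K * u \<theta> + s * f \<theta>)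
          = K * (u2 \<theta> - (l0 + l1) * u1 \<theta> + l0 * l1 * u \<theta>) + s * ?Lf"
        by (simp add: algebra_simps)
      also have "\<dots> = s * ?Lf - K" using Lu \<theta> by simp
      also have "\<dots> \<le> 0"
      proof -
        have "s * ?Lf \<le> \<bar>?Lf\<bar>" using abs_ge_self[of "s * ?Lf"] s by (simp add: abs_mult)
        then show ?thesis using bspec[OF Lf \<theta>] by linarith
      qed
      finally show "K * u2 \<theta> + s * f2 \<theta> - (l0 + l1) * (K * u1 \<theta> + s * f1 \<theta>) + l0 * l1 * (K * u \<theta> + s * f \<theta>) \<le> 0" .
    qed
  qed (use u f in auto)
  from this[of 1] this[of "-1"] show ?thesis by auto
qed

lemma abs_le_SUP_mult_SUP:
  assumes u: "C2_on a b u u1 u2" "u a = 0" "u b = 0"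
    and Lu: "\<forall>t\<in>{a..b}. u2 t - (l0 + l1) * u1 t + l0 * l1 * u t = -1"
    and f: "C2_on a b f f1 f2" "f a = 0" "f b = 0"
    and t: "t \<in> {a..b}"
  shows "\<bar>f t\<bar> \<le> (SUP s\<in>{a..b}. \<bar>u s\<bar>) * (SUP \<theta>\<in>{a..b}. \<bar>f2 \<theta> - (l0 + l1) * f1 \<theta> + l0 * l1 * f \<theta>\<bar>)"
proof -
  define K where "K = (SUP \<theta>\<in>{a..b}. \<bar>f2 \<theta> - (l0 + l1) * f1 \<theta> + l0 * l1 * f \<theta>\<bar>)"
  have Lf: "\<forall>\<theta>\<in>{a..b}. \<bar>f2 \<theta> - (l0 + l1) * f1 \<theta> + l0 * l1 * f \<theta>\<bar> \<le> K"
    unfolding K_def using C2_on_continuous_on[OF f(1)]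
    by (intro ballI le_SUP_continuous_on_Icc continuous_intros) auto
  have "K \<ge> 0" using Lf t by fastforce
  have "\<bar>f t\<bar> \<le> K * u t"
    by (rule comparison_with_boundary_solution[OF u Lu f Lf t])
  also have "\<dots> \<le> K * (SUP s\<in>{a..b}. \<bar>u s\<bar>)"
  proof (rule mult_left_mono[OF _ \<open>K \<ge> 0\<close>])
    have "u t \<le> \<bar>u t\<bar>" by simp
    also have "\<dots> \<le> (SUP s\<in>{a..b}. \<bar>u s\<bar>)"
      using C2_on_continuous_on(1)[OF u(1)] t by (intro le_SUP_continuous_on_Icc continuous_intros)
    finally show "u t \<le> (SUP s\<in>{a..b}. \<bar>u s\<bar>)" .
  qed
  finally show ?thesis by (simp add: K_def mult.commute)
qed

theorem mainTheorem4:
  fixes l0 l1 a b :: real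
  assumes "a < b"
  shows "(let S = {C. \<forall>f f1 f2. C2_on a b f f1 f2 \<and> f a = 0 \<and> f b = 0 \<longrightarrow>
            (\<forall>t\<in>{a..b}. \<bar>f t\<bar> \<le> C * (SUP \<theta>\<in>{a..b}. \<bar>f2 \<theta> - (l0 + l1) * f1 \<theta> + l0 * l1 * f \<theta>\<bar>))}
         in Mconst a b l0 l1 \<in> S \<and> (\<forall>C\<in>S. Mconst a b l0 l1 \<le> C))
       \<and> (\<forall>t\<in>{a<..<b}. Omega a b l0 l1 t > 0)"
proof -
  obtain u u1 u2 u3 where u: "has_derivs3 u u1 u2 u3" "u a = 0" "u b = 0"
    and Lu: "\<forall>t. u2 t - (l0 + l1) * u1 t + l0 * l1 * u t = -1"
    using exists_boundary_solution[OF assms] by blast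
  have Omega: "Omega a b l0 l1 = u" by (rule Omega_eqI[OF assms u Lu])
  have C2u: "C2_on a b u u1 u2" by (rule has_derivs3_C2_on[OF u(1)])
  have pos: "u t > 0" if "t \<in> {a<..<b}" for t
    using strong_maximum_principle[of a b u u1 u2 l0 l1, OF _ _ u(2,3) _ that] C2u Lu
    by (simp add: C2_on_def)
  have least: "(SUP s\<in>{a..b}. \<bar>u s\<bar>) \<le> C"
    if "\<forall>f f1 f2. C2_on a b f f1 f2 \<and> f a = 0 \<and> f b = 0 \<longrightarrow>
        (\<forall>t\<in>{a..b}. \<bar>f t\<bar> \<le> C * (SUP \<theta>\<in>{a..b}. \<bar>f2 \<theta> - (l0 + l1) * f1 \<theta> + l0 * l1 * f \<theta>\<bar>))" for C
  proof -
    have "(SUP \<theta>\<in>{a..b}. \<bar>u2 \<theta> - (l0 + l1) * u1 \<theta> + l0 * l1 * u \<theta>\<bar>) = 1"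
      using Lu assms by simp
    with that[rule_format, of u u1 u2] C2u u(2,3) have "\<forall>t\<in>{a..b}. \<bar>u t\<bar> \<le> C" by simp
    then show ?thesis using assms by (intro cSUP_least) auto
  qed
  show ?thesis
    unfolding Let_def Mconst_def Omega
    using abs_le_SUP_mult_SUP[OF C2u u(2,3)] Lu least pos by auto
qed

end
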